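(* Let $\Gamma=\{0=\rho_1<\rho_2<\cdots\}$ be an Arf numerical semigroup and $d_i=\rho_{i+1}-\rho_i$ for $i\ge1$. If $i\ge2$ and $d_i<d_{i-1}$, then \[ |\mathrm{Ap}(\Gamma,d_i)|=i-1+d_i. \]
   Context: A numerical semigroup is a subset of $\mathbb N$ containing $0$, closed under addition, with finite complement; its elements listed increasingly are $\rho_1<\rho_2<\cdots$. $\Gamma$ is Arf if $\rho_i+\rho_j-\rho_k\in\Gamma$ for all $i\ge j\ge k$. For $x\in\mathbb Z$, $\mathrm{Ap}(\Gamma,x)=\{s\in\Gamma: s-x\notin\Gamma\}$. *)

theory Defs
  imports Main "HOL-Library.Infinite_Set"
begin

definition numerical_semigroup :: "nat set \<Rightarrow> bool" where
  "numerical_semigroup S \<longleftrightarrow>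
     0 \<in> S \<and> (\<forall>a\<in>S. \<forall>b\<in>S. a + b \<in> S) \<and> finite (UNIV - S)"

text \<open>The elements listed increasingly, 1-indexed: rho S 1 = 0 < rho S 2 < ...\<close>
definition rho :: "nat set \<Rightarrow> nat \<Rightarrow> nat" where
  "rho S i = enumerate S (i - 1)"

definition arf :: "nat set \<Rightarrow> bool" where
  "arf S \<longleftrightarrow> (\<forall>i j k. 1 \<le> k \<and> k \<le> j \<and> j \<le> i \<longrightarrow>
      int (rho S i) + int (rho S j) - int (rho S k) \<in> int ` S)"

definition apery :: "nat set \<Rightarrow> int \<Rightarrow> nat set" where
  "apery S x = {s \<in> S. int s - x \<notin> int ` S}"

definition dgap :: "nat set \<Rightarrow> nat \<Rightarrow> nat" where
  "dgap S i = rho S (i + 1) - rho S i"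

end

theory Submission
  imports Defs
begin

text \<open>Write \<open>p = \<rho>\<^sub>i\<close> and \<open>d = d\<^sub>i\<close>. The Arf property makes the gaps
\<open>d\<^sub>1 \<ge> d\<^sub>2 \<ge> \<dots>\<close> nonincreasing, and it makes the elements of \<open>\<Gamma>\<close> above \<open>p\<close> closed
under adding \<open>d\<close>. Below \<open>p\<close>, any two elements of \<open>\<Gamma>\<close> differ by at least
\<open>d\<^sub>i\<^sub>-\<^sub>1 > d\<close>, so the \<open>i - 1\<close> elements \<open>\<rho>\<^sub>1, \<dots>, \<rho>\<^sub>i\<^sub>-\<^sub>1\<close> all lie in
\<open>Ap(\<Gamma>, d)\<close>. From \<open>p\<close> on, \<open>Ap(\<Gamma>, d)\<close> coincides with the Apery set of the
cofinite, \<open>d\<close>-closed set \<open>{x \<in> \<Gamma>. p \<le> x}\<close>, which contains exactly one element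
(the least one) of every residue class modulo \<open>d\<close>.\<close>

lemma numerical_semigroup_infinite: "numerical_semigroup S \<Longrightarrow> infinite S"
  unfolding numerical_semigroup_def
  by (metis finite_Diff2 infinite_UNIV_nat)

lemma mem_apery_nat_iff:
  "x \<in> apery T (int d) \<longleftrightarrow> x \<in> T \<and> (d \<le> x \<longrightarrow> x - d \<notin> T)"
proof -
  have "int x - int d \<in> int ` T \<longleftrightarrow> d \<le> x \<and> x - d \<in> T"
  proof
    assume "int x - int d \<in> int ` T"
    then obtain y where "y \<in> T" "int x - int d = int y"
      by blast
    moreover have "x = y + d"
      using \<open>int x - int d = int y\<close> by linarith
    ultimately show "d \<le> x \<and> x - d \<in> T"
      by simp
  next
    assume "d \<le> x \<and> x - d \<in> T"
    then have "int x - int d = int (x - d)" "x - d \<in> T"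
      by (simp_all add: of_nat_diff)
    then show "int x - int d \<in> int ` T"
      by (rule image_eqI)
  qed
  then show ?thesis
    unfolding apery_def by blast
qed

lemma add_mult_mem:
  fixes T :: "nat set"
  assumes "\<forall>x\<in>T. x + d \<in> T" "x \<in> T"
  shows "x + d * k \<in> T"
proof (induction k)
  case (Suc k)
  then have "x + d * k + d \<in> T"
    using assms(1) by blast
  then show ?case
    by (simp add: algebra_simps)
qed (use assms(2) in simp)

lemma inj_on_mod_apery:
  fixes T :: "nat set"
  assumes closed: "\<forall>x\<in>T. x + d \<in> T"
  shows "inj_on (\<lambda>x. x mod d) (apery T (int d))"
proof -
  have "x = y"
    if x: "x \<in> apery T (int d)" and y: "y \<in> apery T (int d)"
      and "x mod d = y mod d" "x \<le> y" for x y
  proof (rule ccontr)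
    assume "x \<noteq> y"
    have "d dvd y - x"
      using mod_eq_dvd_iff_nat[OF \<open>x \<le> y\<close>, of d] \<open>x mod d = y mod d\<close> by simp
    then obtain k where k: "y - x = d * k"
      by (elim dvdE)
    with \<open>x \<noteq> y\<close> \<open>x \<le> y\<close> obtain j where "k = Suc j"
      by (cases k) auto
    with k \<open>x \<le> y\<close> have "d \<le> y" "y - d = x + d * j"
      by auto
    moreover have "x + d * j \<in> T"
      using add_mult_mem[OF closed] x by (simp add: mem_apery_nat_iff)
    ultimately show False
      using y by (simp add: mem_apery_nat_iff)
  qed
  then show ?thesis
    unfolding inj_on_def by (metis nat_le_linear)
qed

lemma mod_image_apery:
  fixes T :: "nat set"
  assumes "0 < d" and "finite (UNIV - T)"
  shows "(\<lambda>x. x mod d) ` apery T (int d) = {..<d}"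
proof (intro equalityI subsetI)
  fix r
  assume "r \<in> {..<d}"
  obtain N where N: "\<And>y. N \<le> y \<Longrightarrow> y \<in> T"
    using \<open>finite (UNIV - T)\<close> by (metis DiffI UNIV_I finite_nat_set_iff_bounded not_le)
  define M where "M = {x \<in> T. x mod d = r}"
  define s where "s = (LEAST x. x \<in> M)"
  have "N \<le> r + d * N"
    using \<open>0 < d\<close> by (simp add: trans_le_add2)
  then have "r + d * N \<in> M"
    using N \<open>r \<in> {..<d}\<close> unfolding M_def by simp
  then have "s \<in> M"
    unfolding s_def by (rule LeastI)
  then have s: "s \<in> T" "s mod d = r"
    unfolding M_def by auto
  have "s - d \<notin> T" if "d \<le> s"
  proof
    assume "s - d \<in> T"
    with s that have "s - d \<in> M"
      unfolding M_def by (simp add: le_mod_geq)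
    then have "s \<le> s - d"
      unfolding s_def by (rule Least_le)
    with \<open>0 < d\<close> that show False
      by linarith
  qed
  with s show "r \<in> (\<lambda>x. x mod d) ` apery T (int d)"
    by (force simp: mem_apery_nat_iff)
qed (use \<open>0 < d\<close> in auto)

lemma card_apery_translation_closed:
  fixes T :: "nat set"
  assumes "0 < d" "\<forall>x\<in>T. x + d \<in> T" "finite (UNIV - T)"
  shows "card (apery T (int d)) = d"
  using card_image[OF inj_on_mod_apery[OF assms(2)]] mod_image_apery[OF assms(1,3)] by simp

lemma card_less_enumerate:
  fixes S :: "nat set"
  assumes "infinite S"
  shows "card {x \<in> S. x < enumerate S m} = m"
proof -
  have "{x \<in> S. x < enumerate S m} = enumerate S ` {..<m}"
  proof (intro equalityI subsetI)
    fix x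
    assume "x \<in> {x \<in> S. x < enumerate S m}"
    with enumerate_Ex[OF assms] obtain j where "enumerate S j = x" "x < enumerate S m"
      by blast
    with assms show "x \<in> enumerate S ` {..<m}"
      by auto
  qed (use assms enumerate_in_set in auto)
  then show ?thesis
    using inj_enumerate[OF assms] by (simp add: card_image inj_on_subset)
qed

lemma enumerate_eq_if_between:
  fixes S :: "nat set"
  assumes "infinite S" "x \<in> S" "enumerate S m \<le> x" "x < enumerate S (Suc m)"
  shows "x = enumerate S m"
proof -
  obtain j where j: "enumerate S j = x"
    using enumerate_Ex[OF assms(1,2)] by blast
  then have "m \<le> j" "j < Suc m"
    using assms by (metis enumerate_mono_le_iff enumerate_mono_iff)+
  then show ?thesis
    using j by (metis le_antisym less_Suc_eq_le)
qed

lemma arf_enumerate: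
  assumes "arf S" "infinite S" "c \<le> b" "b \<le> a"
  shows "enumerate S a + enumerate S b - enumerate S c \<in> S"
proof -
  have "int (rho S (a + 1)) + int (rho S (b + 1)) - int (rho S (c + 1)) \<in> int ` S"
    using assms(1,3,4) unfolding arf_def by auto
  then obtain x where x: "x \<in> S"
    "int (enumerate S a) + int (enumerate S b) - int (enumerate S c) = int x"
    unfolding rho_def by auto
  have "enumerate S c \<le> enumerate S b"
    using assms by simp
  with x(2) have "x = enumerate S a + enumerate S b - enumerate S c"
    by linarith
  with x(1) show ?thesis
    by simp
qed

lemma arf_gap_Suc_le:
  assumes "arf S" "infinite S"
  shows "enumerate S (Suc (Suc k)) - enumerate S (Suc k)
           \<le> enumerate S (Suc k) - enumerate S k"
proof -
  let ?e = "enumerate S"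
  have "?e (Suc k) + ?e (Suc k) - ?e k \<in> S"
    using arf_enumerate[OF assms] by simp
  then obtain m where m: "?e m = ?e (Suc k) + ?e (Suc k) - ?e k"
    using enumerate_Ex[OF assms(2)] by blast
  have lt: "?e k < ?e (Suc k)"
    using assms(2) by simp
  then have "?e (Suc k) < ?e m"
    using m by linarith
  then have "Suc k < m"
    using assms(2) by simp
  then have "?e (Suc (Suc k)) \<le> ?e m"
    using assms(2) by simp
  then show ?thesis
    using m lt by linarith
qed

lemma arf_gap_antimono:
  assumes "arf S" "infinite S" "k \<le> n"
  shows "enumerate S (Suc n) - enumerate S n \<le> enumerate S (Suc k) - enumerate S k"
  using assms(3)
proof (induction n rule: dec_induct)
  case (step m)
  then show ?case
    using arf_gap_Suc_le[OF assms(1,2), of m] by linarith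
qed simp

lemma arf_gap_le_diff:
  assumes "arf S" "infinite S" "a < b" "b \<le> Suc n"
  shows "enumerate S (Suc n) - enumerate S n \<le> enumerate S b - enumerate S a"
proof -
  obtain c where c: "b = Suc c"
    using assms(3) by (cases b) auto
  have "enumerate S (Suc n) - enumerate S n \<le> enumerate S (Suc c) - enumerate S c"
    using arf_gap_antimono[OF assms(1,2)] c assms(4) by simp
  moreover have "enumerate S a \<le> enumerate S c" "enumerate S c < enumerate S (Suc c)"
    using assms c by simp_all
  ultimately show ?thesis
    unfolding c by linarith
qed

lemma arf_add_gap_mem:
  assumes "arf S" "infinite S" "x \<in> S" "enumerate S n \<le> x"
  shows "x + (enumerate S (Suc n) - enumerate S n) \<in> S"
proof (cases "x = enumerate S n")
  case True
  then show ?thesis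
    using enumerate_in_set[OF assms(2)] enumerate_step[OF assms(2), of n] by simp
next
  case False
  obtain j where j: "enumerate S j = x"
    using enumerate_Ex[OF assms(2,3)] by blast
  have "n \<le> j"
    using assms(2,4) by (simp flip: j)
  moreover have "j \<noteq> n"
    using False j by blast
  ultimately have "Suc n \<le> j"
    by simp
  then have "x + enumerate S (Suc n) - enumerate S n \<in> S"
    using arf_enumerate[OF assms(1,2), of n "Suc n" j] j by simp
  then show ?thesis
    using enumerate_step[OF assms(2), of n] by simp
qed

text \<open>Any two elements of \<open>S\<close> up to \<open>enumerate S (Suc n)\<close> differ by at least
the gap ending there, so none of them drops by a smaller \<open>d\<close> into \<open>S\<close>.\<close>

lemma arf_mem_apery_upto:
  assumes "arf S" "infinite S" "0 < d" "d < enumerate S (Suc n) - enumerate S n"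
    and "x \<in> S" "x \<le> enumerate S (Suc n)"
  shows "x \<in> apery S (int d)"
proof -
  have False if "d \<le> x" "x - d \<in> S"
  proof -
    obtain b a where b: "enumerate S b = x" and a: "enumerate S a = x - d"
      using enumerate_Ex[OF assms(2)] \<open>x \<in> S\<close> \<open>x - d \<in> S\<close> by metis
    have "enumerate S a < enumerate S b"
      using a b that assms(3) by simp
    then have "a < b"
      using assms(2) by simp
    moreover have "b \<le> Suc n"
      using assms(2,6) by (simp flip: b)
    ultimately have "enumerate S (Suc n) - enumerate S n \<le> enumerate S b - enumerate S a"
      by (rule arf_gap_le_diff[OF assms(1,2)])
    then show False
      using a b that assms(4) by linarith
  qed
  then show ?thesis
    using \<open>x \<in> S\<close> by (force simp: mem_apery_nat_iff)
qed

lemma arf_apery_split: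
  fixes S :: "nat set" and n :: nat
  defines "p \<equiv> enumerate S (Suc n)"
    and "d \<equiv> enumerate S (Suc (Suc n)) - enumerate S (Suc n)"
  assumes "arf S" "infinite S" "d < enumerate S (Suc n) - enumerate S n"
  shows "apery S (int d) = {x \<in> S. x < p} \<union> apery {x \<in> S. p \<le> x} (int d)"
proof (intro equalityI subsetI)
  fix x
  assume "x \<in> apery S (int d)"
  then show "x \<in> {x \<in> S. x < p} \<union> apery {x \<in> S. p \<le> x} (int d)"
    by (auto simp: mem_apery_nat_iff)
next
  fix x
  assume x: "x \<in> {x \<in> S. x < p} \<union> apery {x \<in> S. p \<le> x} (int d)"
  have next_p: "enumerate S (Suc (Suc n)) = p + d"
    using enumerate_step[OF assms(4), of "Suc n"] unfolding p_def d_def by simp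
  then have d0: "0 < d"
    using enumerate_step[OF assms(4), of "Suc n"] unfolding p_def by simp
  have p: "p \<in> apery S (int d)"
    using arf_mem_apery_upto[OF assms(3,4) d0 assms(5)] enumerate_in_set[OF assms(4)] p_def by simp
  show "x \<in> apery S (int d)"
  proof (cases "x < p")
    case True
    then have "x \<in> S"
      using x by (auto simp: mem_apery_nat_iff)
    with True show ?thesis
      using arf_mem_apery_upto[OF assms(3,4) d0 assms(5)] p_def by simp
  next
    case False
    then have "x \<in> S" "p \<le> x" and no_drop: "d \<le> x \<Longrightarrow> x - d \<notin> {x \<in> S. p \<le> x}"
      using x by (auto simp: mem_apery_nat_iff)
    \<comment> \<open>a drop by \<open>d\<close> below \<open>p\<close> forces \<open>x < p + d\<close>, i.e. \<open>x = p\<close>\<close>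
    have "x - d \<notin> S" if "d \<le> x"
    proof
      assume "x - d \<in> S"
      then have "x < enumerate S (Suc (Suc n))"
        using no_drop that next_p by auto
      then have "x = p"
        using enumerate_eq_if_between[OF assms(4) \<open>x \<in> S\<close>] \<open>p \<le> x\<close> p_def by simp
      with p \<open>x - d \<in> S\<close> that show False
        by (simp add: mem_apery_nat_iff)
    qed
    with \<open>x \<in> S\<close> show ?thesis
      by (simp add: mem_apery_nat_iff)
  qed
qed

lemma arf_card_apery_above:
  fixes S :: "nat set" and n :: nat
  defines "d \<equiv> enumerate S (Suc n) - enumerate S n"
  assumes "numerical_semigroup S" "arf S"
  shows "card (apery {x \<in> S. enumerate S n \<le> x} (int d)) = d"
proof (rule card_apery_translation_closed)
  have inf: "infinite S"
    using assms(2) by (rule numerical_semigroup_infinite)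
  then show "0 < d"
    unfolding d_def by simp
  show "\<forall>x\<in>{x \<in> S. enumerate S n \<le> x}. x + d \<in> {x \<in> S. enumerate S n \<le> x}"
    using arf_add_gap_mem[OF assms(3) inf] unfolding d_def by auto
  have "UNIV - {x \<in> S. enumerate S n \<le> x} \<subseteq> (UNIV - S) \<union> {..<enumerate S n}"
    by auto
  then show "finite (UNIV - {x \<in> S. enumerate S n \<le> x})"
    using assms(2) unfolding numerical_semigroup_def by (auto intro: finite_subset)
qed

theorem corollary3p4:
  fixes S :: "nat set" and i :: nat
  assumes "numerical_semigroup S" and "arf S"
    and "i \<ge> 2" and "dgap S i < dgap S (i - 1)"
  shows "card (apery S (int (dgap S i))) = i - 1 + dgap S i"
proof -
  have inf: "infinite S"
    using assms(1) by (rule numerical_semigroup_infinite)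
  obtain n where i: "i = Suc (Suc n)"
    using assms(3) by (metis add_2_eq_Suc le_Suc_ex)
  define p where "p = enumerate S (Suc n)"
  define d where "d = enumerate S (Suc (Suc n)) - enumerate S (Suc n)"
  have d: "dgap S i = d" "d < enumerate S (Suc n) - enumerate S n" "0 < d"
    using assms(4) inf unfolding dgap_def rho_def d_def i by simp_all
  let ?A = "apery {x \<in> S. p \<le> x} (int d)"
  have "card ?A = d"
    using arf_card_apery_above[OF assms(1,2)] unfolding p_def d_def .
  moreover have "card {x \<in> S. x < p} = Suc n"
    unfolding p_def using card_less_enumerate[OF inf] .
  ultimately have "card ({x \<in> S. x < p} \<union> ?A) = Suc n + d"
    using d(3) by (subst card_Un_disjoint) (auto simp: mem_apery_nat_iff intro: card_ge_0_finite)
  moreover have "apery S (int d) = {x \<in> S. x < p} \<union> ?A"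
    using arf_apery_split[OF assms(2) inf] d(2) unfolding p_def d_def by blast
  ultimately show ?thesis
    using d(1) i by simp
qed

end
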